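(* Let $\Bbbk$ be a field. Let $A'$ be a standard graded artinian $\Bbbk$-algebra failing the WLP, and let $A''$ be a standard graded artinian $\Bbbk$-algebra whose Hilbert series has at least one isolated peak. Then $A = A' \otimes_\Bbbk A''$ fails the WLP. Specifically, if $A'$ fails the WLP in degree $i$ and the Hilbert series of $A''$ has an isolated peak in degree $j$, then $A$ fails the WLP in degree $i+j$.
   Context: A standard graded artinian algebra $A=\bigoplus_i A_i$ has the WLP if there is a linear form $\ell$ such that $\times\ell:A_k\to A_{k+1}$ has maximal rank (is injective or surjective) for every $k$. $A$ fails the WLP in degree $i$ if for a general linear form $\ell$ the map $\times \ell: A_i\to A_{i+1}$ does not have maximal rank. The Hilbert function is $\mathrm{HF}(A,k)=\dim_\Bbbk A_k$; the Hilbert series has an isolated peak in degree $j\ge 1$ if $\mathrm{HF}(A,j-1)<\mathrm{HF}(A,j)>\mathrm{HF}(A,j+1)$. *)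

theory Defs
  imports Complex_Main "HOL-Library.Poly_Mapping"
begin

text \<open>A standard graded artinian algebra is presented as P / I with P a polynomial
  ring in finitely many variables (a finite variable type) and I a proper
  homogeneous ideal such that (P/I)_d = 0 for d large.\<close>

type_synonym ('v, 'k) mpoly = "('v \<Rightarrow>\<^sub>0 nat) \<Rightarrow>\<^sub>0 'k"

definition mdeg :: "('v \<Rightarrow>\<^sub>0 nat) \<Rightarrow> nat" where
  "mdeg m = (\<Sum>v\<in>Poly_Mapping.keys m. Poly_Mapping.lookup m v)"

definition homogeneous :: "nat \<Rightarrow> ('v, 'k::zero) mpoly \<Rightarrow> bool" where
  "homogeneous d p \<longleftrightarrow> (\<forall>m\<in>Poly_Mapping.keys p. mdeg m = d)"

definition hcomp :: "nat \<Rightarrow> ('v, 'k::comm_monoid_add) mpoly \<Rightarrow> ('v, 'k) mpoly" where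
  "hcomp d p = (\<Sum>m\<in>{m\<in>Poly_Mapping.keys p. mdeg m = d}. Poly_Mapping.single m (Poly_Mapping.lookup p m))"

definition is_ideal :: "('v, 'k::comm_ring_1) mpoly set \<Rightarrow> bool" where
  "is_ideal I \<longleftrightarrow> 0 \<in> I \<and> (\<forall>p\<in>I. \<forall>q\<in>I. p + q \<in> I) \<and> (\<forall>f. \<forall>p\<in>I. f * p \<in> I)"

definition homog_ideal :: "('v, 'k::comm_ring_1) mpoly set \<Rightarrow> bool" where
  "homog_ideal I \<longleftrightarrow> is_ideal I \<and> (\<forall>p\<in>I. \<forall>d. hcomp d p \<in> I)"

definition ideal_gen :: "('v, 'k::comm_ring_1) mpoly set \<Rightarrow> ('v, 'k) mpoly set" where
  "ideal_gen S = \<Inter>{K. is_ideal K \<and> S \<subseteq> K}"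

definition std_graded_artinian :: "('v::finite, 'k::field) mpoly set \<Rightarrow> bool" where
  "std_graded_artinian I \<longleftrightarrow> homog_ideal I \<and> 1 \<notin> I \<and>
     (\<exists>N. \<forall>d\<ge>N. \<forall>p. homogeneous d p \<longrightarrow> p \<in> I)"

text \<open>k-vector space structure on polynomials (scalars = constants).\<close>
definition psmult :: "'k::comm_ring_1 \<Rightarrow> ('v, 'k) mpoly \<Rightarrow> ('v, 'k) mpoly" where
  "psmult c p = Poly_Mapping.single 0 c * p"

text \<open>Hilbert function: dim_k (P/I)_d = dim_k P_d - dim_k I_d.\<close>
definition hf :: "('v::finite, 'k::field) mpoly set \<Rightarrow> nat \<Rightarrow> nat" where
  "hf I d = vector_space.dim psmult {p :: ('v, 'k) mpoly. homogeneous d p}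
          - vector_space.dim psmult {p \<in> I. homogeneous d p}"

definition isolated_peak :: "('v::finite, 'k::field) mpoly set \<Rightarrow> nat \<Rightarrow> bool" where
  "isolated_peak I j \<longleftrightarrow> j \<ge> 1 \<and> hf I (j - 1) < hf I j \<and> hf I (j + 1) < hf I j"

text \<open>Multiplication by (the class of) the linear form l, (P/I)_i \<rightarrow> next degree,
  has maximal rank: injective or surjective.\<close>
definition max_rank :: "('v, 'k::field) mpoly set \<Rightarrow> ('v, 'k) mpoly \<Rightarrow> nat \<Rightarrow> bool" where
  "max_rank I l i \<longleftrightarrow>
     (\<forall>f. homogeneous i f \<and> l * f \<in> I \<longrightarrow> f \<in> I) \<or>
     (\<forall>g. homogeneous (i + 1) g \<longrightarrow> (\<exists>f. homogeneous i f \<and> g - l * f \<in> I))"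

definition has_WLP :: "('v, 'k::field) mpoly set \<Rightarrow> bool" where
  "has_WLP I \<longleftrightarrow> (\<exists>l. homogeneous 1 l \<and> (\<forall>k. max_rank I l k))"

definition fails_WLP_in :: "('v, 'k::field) mpoly set \<Rightarrow> nat \<Rightarrow> bool" where
  "fails_WLP_in I i \<longleftrightarrow> (\<forall>l. homogeneous 1 l \<longrightarrow> \<not> max_rank I l i)"

text \<open>Tensor product: (k[x]/I) \<otimes>_k (k[y]/J) = k[x,y]/(I k[x,y] + J k[x,y]).\<close>
definition mon_l :: "('a \<Rightarrow>\<^sub>0 nat) \<Rightarrow> ('a + 'b \<Rightarrow>\<^sub>0 nat)" where
  "mon_l m = (\<Sum>a\<in>Poly_Mapping.keys m. Poly_Mapping.single (Inl a) (Poly_Mapping.lookup m a))"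

definition mon_r :: "('b \<Rightarrow>\<^sub>0 nat) \<Rightarrow> ('a + 'b \<Rightarrow>\<^sub>0 nat)" where
  "mon_r m = (\<Sum>b\<in>Poly_Mapping.keys m. Poly_Mapping.single (Inr b) (Poly_Mapping.lookup m b))"

definition emb_l :: "('a, 'k::comm_monoid_add) mpoly \<Rightarrow> ('a + 'b, 'k) mpoly" where
  "emb_l p = (\<Sum>m\<in>Poly_Mapping.keys p. Poly_Mapping.single (mon_l m) (Poly_Mapping.lookup p m))"

definition emb_r :: "('b, 'k::comm_monoid_add) mpoly \<Rightarrow> ('a + 'b, 'k) mpoly" where
  "emb_r p = (\<Sum>m\<in>Poly_Mapping.keys p. Poly_Mapping.single (mon_r m) (Poly_Mapping.lookup p m))"

definition tensor_ideal :: "('a, 'k::comm_ring_1) mpoly set \<Rightarrow> ('b, 'k) mpoly set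
    \<Rightarrow> ('a + 'b, 'k) mpoly set" where
  "tensor_ideal I J = ideal_gen (emb_l ` I \<union> emb_r ` J)"

end

theory Submission
  imports Defs
begin

text \<open>
  Failure of maximal rank is witnessed by linear functionals on the polynomial rings. Every linear
  form on the tensor product splits as l = l1 \<otimes> 1 + 1 \<otimes> l2, and if c1 and c2 vanish on I and J,
  then c1 \<otimes> c2 vanishes on the tensor ideal I \<otimes> 1 + 1 \<otimes> J.

  Injectivity fails: choose a \<notin> I of degree i with l1 a \<in> I and, since the Hilbert function of J
  drops after j, some b \<notin> J of degree j with l2 b \<in> J. Then l kills a \<otimes> b, which is nonzero
  modulo the tensor ideal because c1 \<otimes> c2 with c1 a = c2 b = 1 does not vanish on it.

  Surjectivity fails: multiplication by l1 misses some g1 of degree i + 1 and, since the Hilbert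
  function of J rises into degree j, multiplication by l2 misses some g2 of degree j. Take c1
  supported in degree i + 1 with c1 g1 = 1 that vanishes on I and on l1 times all forms of degree i,
  and c2 likewise. Then c1 \<otimes> c2 vanishes on the tensor ideal and, for degree reasons, on l times
  every form of degree i + j, but not on g1 \<otimes> g2.
\<close>

section \<open>Dimensions of quotient spaces\<close>

context vector_space
begin

lemma finite_basis_exists:
  assumes "V \<subseteq> span F" "finite F"
  obtains B where "B \<subseteq> V" "independent B" "V \<subseteq> span B" "finite B" "card B = dim V"
proof -
  obtain B where B: "B \<subseteq> V" "independent B" "V \<subseteq> span B" "card B = dim V"
    by (rule basis_exists)
  moreover have "finite B"
    using independent_span_bound[OF assms(2) B(2)] B(1) assms(1) by auto
  ultimately show ?thesis using that by blast
qed

lemma card_le_dim_if_independent: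
  assumes "independent S" "S \<subseteq> V" "V \<subseteq> span F" "finite F"
  shows "card S \<le> dim V"
proof -
  obtain B where "V \<subseteq> span B" "finite B" "card B = dim V"
    using finite_basis_exists[OF assms(3,4)] by blast
  then show ?thesis using independent_span_bound[OF _ assms(1)] assms(2) by fastforce
qed

lemma span_Int_eq_0:
  assumes "independent (A \<union> B)" "A \<inter> B = {}" "finite A" "finite B"
    and "x \<in> span A" "x \<in> span B"
  shows "x = 0"
proof -
  obtain u where u: "x = (\<Sum>v\<in>A. u v *s v)" using assms(3,5) by (auto simp: span_finite)
  obtain w where w: "x = (\<Sum>v\<in>B. w v *s v)" using assms(4,6) by (auto simp: span_finite)
  define t where "t v = (if v \<in> A then u v else - w v)" for v
  have "(\<Sum>v\<in>A. t v *s v) = x" unfolding u t_def by (rule sum.cong) auto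
  moreover have "(\<Sum>v\<in>B. t v *s v) = (\<Sum>v\<in>B. - (w v *s v))"
    using assms(2) by (intro sum.cong) (auto simp: t_def scale_minus_left)
  then have "(\<Sum>v\<in>B. t v *s v) = - x" by (simp add: w sum_negf)
  ultimately have "(\<Sum>v\<in>A \<union> B. t v *s v) = 0"
    using assms(2-4) by (simp add: sum.union_disjoint)
  then have "t v = 0" if "v \<in> A" for v
    using independentD[OF assms(1) _ subset_refl] assms(3,4) that by blast
  then show ?thesis unfolding u by (simp add: t_def)
qed

lemma independent_Un_if_span_Int_eq_0:
  assumes "finite S" "independent S" "independent T"
    and "\<And>x. x \<in> span S \<Longrightarrow> x \<in> span T \<Longrightarrow> x = 0"
  shows "independent (S \<union> T)"
  using assms
proof (induction S rule: finite_induct)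
  case empty
  then show ?case by simp
next
  case (insert a S)
  have S_sub: "span S \<subseteq> span (insert a S)" by (rule span_mono) blast
  have "independent S" using insert.prems(1) by (rule independent_mono) blast
  then have IH: "independent (S \<union> T)" using insert.IH insert.prems(2,3) S_sub by blast
  have "a \<notin> span (S \<union> T)"
  proof
    assume "a \<in> span (S \<union> T)"
    then obtain x y where xy: "a = x + y" "x \<in> span S" "y \<in> span T" by (auto simp: span_Un)
    have "y = a - x" using xy(1) by simp
    also have "\<dots> \<in> span (insert a S)"
      using span_diff[OF span_base[OF insertI1] subsetD[OF S_sub xy(2)]] .
    finally have "y = 0" using insert.prems(3) xy(3) by blast
    then have "a \<in> span S" using xy by simp
    with insert.hyps(2) insert.prems(1) show False by (simp add: independent_insert)
  qed
  with IH show ?case by (simp add: independent_insertI)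
qed

lemma complement_exists:
  assumes "U \<subseteq> V" "V \<subseteq> span F" "finite F"
  obtains C where "C \<subseteq> V" "finite C" "independent C" "card C = dim V - dim U"
    "V \<subseteq> span (U \<union> C)" "span C \<inter> U \<subseteq> {0}"
proof -
  have "U \<subseteq> span F" using assms(1,2) by (rule order.trans)
  then obtain B where B: "B \<subseteq> U" "independent B" "U \<subseteq> span B" "finite B" "card B = dim U"
    using assms(3) by (rule finite_basis_exists)
  obtain B' where B': "B \<subseteq> B'" "B' \<subseteq> V" "independent B'" "V \<subseteq> span B'"
    using maximal_independent_subset_extend[of B V] B(1,2) assms(1) by blast
  have "finite B'" using independent_span_bound[OF assms(3) B'(3)] B'(2) assms(2) by auto
  have "card B' = dim V" by (rule basis_card_eq_dim[OF B'(2,4,3)])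
  define C where "C = B' - B"
  have B'_eq: "B' = B \<union> C" using B'(1) by (auto simp: C_def)
  show ?thesis
  proof (rule that[of C])
    show "C \<subseteq> V" "finite C" using B'(2) \<open>finite B'\<close> by (auto simp: C_def)
    show "independent C" using B'(3) by (rule independent_mono) (auto simp: C_def)
    show "card C = dim V - dim U"
      using card_Diff_subset[OF B(4) B'(1)] \<open>card B' = dim V\<close> B(5) by (simp add: C_def)
    have "span B' \<subseteq> span (U \<union> C)" using B(1) B'_eq by (intro span_mono) blast
    then show "V \<subseteq> span (U \<union> C)" using B'(4) by blast
    have "x = 0" if "x \<in> span C" "x \<in> U" for x
    proof (rule span_Int_eq_0[of C B])
      show "independent (C \<union> B)" using B'(3) B'_eq by (simp add: Un_commute)
    qed (use that B(3,4) \<open>finite C\<close> in \<open>auto simp: C_def\<close>)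
    then show "span C \<inter> U \<subseteq> {0}" by blast
  qed
qed

lemma card_add_dim_le_if_independent_mod:
  assumes "finite C" "independent C" "subspace U" "\<mu> ` C \<subseteq> V" "U \<subseteq> V" "V \<subseteq> span F" "finite F"
    and hom: "module_hom scale scale \<mu>"
    and ker: "\<And>x. x \<in> span C \<Longrightarrow> \<mu> x \<in> U \<Longrightarrow> x = 0"
  shows "card C + dim U \<le> dim V"
proof -
  have "U \<subseteq> span F" using assms(5,6) by (rule order.trans)
  then obtain B where B: "B \<subseteq> U" "independent B" "U \<subseteq> span B" "finite B" "card B = dim U"
    using assms(7) by (rule finite_basis_exists)
  have inj_C: "inj_on \<mu> (span C)"
  proof (rule inj_onI)
    fix x y assume "x \<in> span C" "y \<in> span C" "\<mu> x = \<mu> y"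
    then have "\<mu> (x - y) = 0" by (simp add: module_hom.diff[OF hom])
    then have "x - y = 0"
      using ker[of "x - y"] subspace_0[OF assms(3)] span_diff[OF \<open>x \<in> span C\<close> \<open>y \<in> span C\<close>]
      by simp
    then show "x = y" by simp
  qed
  have span_B: "span B \<subseteq> U" using B(1) assms(3) by (rule span_minimal)
  have disjoint_spans: "y = 0" if y: "y \<in> span (\<mu> ` C)" "y \<in> span B" for y
  proof -
    obtain x where x: "x \<in> span C" "y = \<mu> x"
      using y(1) module_hom.span_image[OF hom, of C] by auto
    then have "x = 0" using ker y(2) span_B by blast
    then show ?thesis using x(2) module_hom.zero[OF hom] by simp
  qed
  have "independent (\<mu> ` C)"
    using module_hom.independent_injective_image[OF hom assms(2) inj_C] .
  then have "independent (\<mu> ` C \<union> B)"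
    using assms(1) B(2) disjoint_spans by (intro independent_Un_if_span_Int_eq_0) auto
  moreover have "\<mu> ` C \<union> B \<subseteq> V" using assms(4,5) B(1) by blast
  ultimately have "card (\<mu> ` C \<union> B) \<le> dim V"
    using assms(6,7) by (rule card_le_dim_if_independent)
  moreover have "\<mu> ` C \<inter> B = {}"
  proof -
    have "0 \<notin> B" using B(2) dependent_zero by blast
    then have "y \<notin> B" if "y \<in> \<mu> ` C" for y
      using disjoint_spans[OF span_base[OF that] span_base] by metis
    then show ?thesis by blast
  qed
  moreover have "card (\<mu> ` C) = card C"
    using card_image inj_on_subset[OF inj_C span_superset] by blast
  ultimately show ?thesis using assms(1) B(4,5) by (simp add: card_Un_disjoint)
qed

lemma quotient_dim_le_if_injective:
  assumes "V1 \<subseteq> span F1" "finite F1" "V2 \<subseteq> span F2" "finite F2"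
    and "U1 \<subseteq> V1" "U2 \<subseteq> V2" "subspace V1" "subspace U2"
    and hom: "module_hom scale scale \<mu>" and "\<mu> ` V1 \<subseteq> V2"
    and inj: "\<And>x. x \<in> V1 \<Longrightarrow> \<mu> x \<in> U2 \<Longrightarrow> x \<in> U1"
  shows "dim V1 - dim U1 \<le> dim V2 - dim U2"
proof -
  obtain C where C: "C \<subseteq> V1" "finite C" "independent C" "card C = dim V1 - dim U1"
      "V1 \<subseteq> span (U1 \<union> C)" "span C \<inter> U1 \<subseteq> {0}"
    by (rule complement_exists[OF assms(5,1,2)])
  have "span C \<subseteq> V1" using C(1) assms(7) by (rule span_minimal)
  then have "x = 0" if "x \<in> span C" "\<mu> x \<in> U2" for x
    using inj C(6) that by blast
  moreover have "\<mu> ` C \<subseteq> V2" using C(1) assms(10) by blast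
  ultimately have "card C + dim U2 \<le> dim V2"
    using card_add_dim_le_if_independent_mod[OF C(2,3) assms(8) _ assms(6,3,4) hom] by blast
  then show ?thesis using C(4) by simp
qed

lemma quotient_dim_le_if_surjective:
  assumes "V1 \<subseteq> span F1" "finite F1" "V2 \<subseteq> span F2" "finite F2"
    and "U1 \<subseteq> V1" "U2 \<subseteq> V2" "subspace U1" "subspace U2"
    and hom: "module_hom scale scale \<mu>" and "\<mu> ` U1 \<subseteq> U2"
    and surj: "\<And>y. y \<in> V2 \<Longrightarrow> \<exists>x\<in>V1. y - \<mu> x \<in> U2"
  shows "dim V2 - dim U2 \<le> dim V1 - dim U1"
proof -
  obtain C where C: "C \<subseteq> V1" "finite C" "independent C" "card C = dim V1 - dim U1"
      "V1 \<subseteq> span (U1 \<union> C)" "span C \<inter> U1 \<subseteq> {0}"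
    by (rule complement_exists[OF assms(5,1,2)])
  have "U2 \<subseteq> span F2" using assms(6,3) by (rule order.trans)
  then obtain B where B: "B \<subseteq> U2" "independent B" "U2 \<subseteq> span B" "finite B" "card B = dim U2"
    using assms(4) by (rule finite_basis_exists)
  let ?S = "span (B \<union> \<mu> ` C)"
  have "V2 \<subseteq> ?S"
  proof
    fix y assume "y \<in> V2"
    then obtain x where x: "x \<in> V1" "y - \<mu> x \<in> U2" using surj by blast
    then obtain x1 x2 where x12: "x = x1 + x2" "x1 \<in> span U1" "x2 \<in> span C"
      using C(5) by (auto simp: span_Un)
    have "x1 \<in> U1" using span_minimal[OF order_refl assms(7)] x12(2) by blast
    have U2_S: "U2 \<subseteq> ?S" using B(3) span_mono[of B "B \<union> \<mu> ` C"] by blast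
    have "y - \<mu> x \<in> ?S" using x(2) U2_S by blast
    moreover have "\<mu> x1 \<in> ?S" using assms(10) \<open>x1 \<in> U1\<close> U2_S by blast
    moreover have "\<mu> x2 \<in> ?S"
      using module_hom.span_image[OF hom, of C] x12(3) span_mono[of "\<mu> ` C" "B \<union> \<mu> ` C"] by blast
    moreover have "y = (y - \<mu> x) + \<mu> x1 + \<mu> x2" using x12(1) module_hom.add[OF hom] by simp
    ultimately show "y \<in> ?S" by (metis span_add)
  qed
  then have "dim V2 \<le> card (B \<union> \<mu> ` C)" using B(4) C(2) by (intro dim_le_card) auto
  also have "\<dots> \<le> card B + card C"
    using card_Un_le[of B "\<mu> ` C"] card_image_le[OF C(2), of \<mu>] by linarith
  finally show ?thesis using B(5) C(4) by simp
qed

end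


abbreviation (input) lookup where "lookup \<equiv> Poly_Mapping.lookup"
abbreviation (input) keys where "keys \<equiv> Poly_Mapping.keys"
abbreviation (input) single where "single \<equiv> Poly_Mapping.single"

lemma poly_mapping_sum_single: "(\<Sum>k\<in>keys p. single k (lookup p k)) = p"
  by (rule poly_mapping_eqI)
     (auto simp: lookup_sum lookup_single when_def in_keys_iff sum.delta' split: if_splits)

lemma poly_mapping_additive_eqI:
  fixes F G :: "('a \<Rightarrow>\<^sub>0 'b::comm_monoid_add) \<Rightarrow> 'c::comm_monoid_add"
  assumes F_add: "\<And>p q. F (p + q) = F p + F q" and G_add: "\<And>p q. G (p + q) = G p + G q"
    and single: "\<And>k v. F (single k v) = G (single k v)"
  shows "F p = G p"
proof -
  have "F (\<Sum>k\<in>A. single k (lookup p k)) = G (\<Sum>k\<in>A. single k (lookup p k))" if "finite A" for A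
    using that
  proof (induction A rule: finite_induct)
    case empty
    show ?case using single[of undefined 0] by simp
  next
    case (insert k A)
    then show ?case by (simp add: F_add G_add single)
  qed
  then show ?thesis by (metis finite_keys poly_mapping_sum_single)
qed

definition push_key :: "('a \<Rightarrow> 'b) \<Rightarrow> ('a \<Rightarrow>\<^sub>0 'c::comm_monoid_add) \<Rightarrow> 'b \<Rightarrow>\<^sub>0 'c" where
  "push_key f p = (\<Sum>k\<in>keys p. single (f k) (lookup p k))"

lemma push_key_superset:
  assumes "finite S" "keys p \<subseteq> S"
  shows "push_key f p = (\<Sum>k\<in>S. single (f k) (lookup p k))"
  unfolding push_key_def using assms by (intro sum.mono_neutral_left) (auto simp: in_keys_iff)

lemma push_key_add: "push_key f (p + q) = push_key f p + push_key f q"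
proof -
  let ?S = "keys p \<union> keys q"
  have "push_key f (p + q) = (\<Sum>k\<in>?S. single (f k) (lookup p k + lookup q k))"
    using keys_add[of p q] by (subst push_key_superset[of ?S]) (auto simp: lookup_add)
  also have "\<dots> = push_key f p + push_key f q"
    by (simp add: single_add sum.distrib push_key_superset[of ?S])
  finally show ?thesis .
qed

lemma push_key_single [simp]: "push_key f (single k v) = single (f k) v"
  by (cases "v = 0") (simp_all add: push_key_def)

lemma lookup_push_key_image:
  assumes "inj f"
  shows "lookup (push_key f p) (f k) = lookup p k"
  unfolding push_key_def lookup_sum lookup_single when_def
  using assms by (simp add: inj_eq sum.delta in_keys_iff)

lemma lookup_push_key_outside: "k \<notin> range f \<Longrightarrow> lookup (push_key f p) k = 0"
  unfolding push_key_def lookup_sum lookup_single when_def by (intro sum.neutral) auto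

lemma keys_push_key:
  assumes "inj f"
  shows "keys (push_key f p) = f ` keys p"
proof
  show "keys (push_key f p) \<subseteq> f ` keys p"
    unfolding push_key_def by (rule order.trans[OF keys_sum]) auto
  show "f ` keys p \<subseteq> keys (push_key f p)"
    using assms by (auto simp: in_keys_iff lookup_push_key_image)
qed

lemma push_key_mult:
  fixes p q :: "'a::monoid_add \<Rightarrow>\<^sub>0 'c::comm_semiring_1"
  assumes f_add: "\<And>u v. f (u + v) = f u + f v"
  shows "push_key f (p * q) = push_key f p * push_key f q"
proof (rule poly_mapping_additive_eqI[where F = "\<lambda>p. push_key f (p * q)"
                                        and G = "\<lambda>p. push_key f p * push_key f q"])
  fix u a
  show "push_key f (single u a * q) = push_key f (single u a) * push_key f q"
    by (rule poly_mapping_additive_eqI[where F = "\<lambda>q. push_key f (single u a * q)"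
                                         and G = "\<lambda>q. push_key f (single u a) * push_key f q"])
       (simp_all only: distrib_left push_key_add mult_single push_key_single f_add)
qed (simp_all only: distrib_right push_key_add)


section \<open>Homogeneous polynomials and ideals\<close>

lemma mdeg_superset: "finite S \<Longrightarrow> keys m \<subseteq> S \<Longrightarrow> mdeg m = (\<Sum>v\<in>S. lookup m v)"
  unfolding mdeg_def by (rule sum.mono_neutral_left) (auto simp: in_keys_iff)

lemma mdeg_add: "mdeg (m + n) = mdeg m + mdeg n"
proof -
  let ?S = "keys m \<union> keys n"
  have "mdeg (m + n) = (\<Sum>v\<in>?S. lookup m v + lookup n v)"
    using keys_add[of m n] by (subst mdeg_superset[of ?S]) (auto simp: lookup_add)
  also have "\<dots> = mdeg m + mdeg n"
    by (simp add: sum.distrib mdeg_superset[of ?S])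
  finally show ?thesis .
qed

lemma mdeg_zero [simp]: "mdeg 0 = 0"
  by (simp add: mdeg_def)

lemma mdeg_eq_0_iff: "mdeg m = 0 \<longleftrightarrow> m = 0"
  by (auto simp: mdeg_def in_keys_iff poly_mapping_eqI)

lemma mdeg_push_key: "inj f \<Longrightarrow> mdeg (push_key f m) = mdeg m"
  by (simp add: mdeg_def keys_push_key sum.reindex inj_on_subset[of f UNIV] lookup_push_key_image)

lemma finite_monomials_of_degree: "finite {m :: 'v::finite \<Rightarrow>\<^sub>0 nat. mdeg m = d}"
proof -
  have "lookup m v \<le> d" if "mdeg m = d" for m :: "'v \<Rightarrow>\<^sub>0 nat" and v
    using that unfolding mdeg_def
    by (cases "v \<in> keys m") (auto simp: in_keys_iff intro: member_le_sum)
  then have "lookup ` {m :: 'v \<Rightarrow>\<^sub>0 nat. mdeg m = d} \<subseteq> {f. \<forall>v. f v \<in> {0..d}}"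
    by auto
  moreover have "finite {f :: 'v \<Rightarrow> nat. \<forall>v. f v \<in> {0..d}}"
    using finite_set_of_finite_funs[of "UNIV :: 'v set" "{0..d}" 0] by simp
  ultimately show ?thesis
    by (rule finite_imageD[OF finite_subset]) (simp add: inj_on_def poly_mapping_eqI)
qed

lemma homogeneous_iff: "homogeneous d p \<longleftrightarrow> (\<forall>m. lookup p m \<noteq> 0 \<longrightarrow> mdeg m = d)"
  by (auto simp: homogeneous_def in_keys_iff)

lemma homogeneous_0 [simp]: "homogeneous d 0"
  by (simp add: homogeneous_iff)

lemma homogeneous_add: "homogeneous d p \<Longrightarrow> homogeneous d q \<Longrightarrow> homogeneous d (p + q)"
  unfolding homogeneous_iff lookup_add by (metis add.right_neutral)

lemma homogeneous_diff:
  "homogeneous d (p :: ('v, 'k::ab_group_add) mpoly) \<Longrightarrow> homogeneous d q \<Longrightarrow> homogeneous d (p - q)"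
  unfolding homogeneous_iff lookup_minus by (metis diff_self)

lemma homogeneous_mult: "homogeneous a p \<Longrightarrow> homogeneous b q \<Longrightarrow> homogeneous (a + b) (p * q)"
  unfolding homogeneous_def using keys_mult[of p q] by (auto simp: mdeg_add)

lemma homogeneous_single: "homogeneous (mdeg m) (single m c)"
  by (simp add: homogeneous_iff lookup_single when_def)

lemma homogeneous_push_key:
  assumes "inj f" "\<And>m. mdeg (f m) = mdeg m" "homogeneous d p"
  shows "homogeneous d (push_key f p)"
  using assms by (auto simp: homogeneous_def keys_push_key)

lemma lookup_hcomp: "lookup (hcomp d p) m = (if mdeg m = d then lookup p m else 0)"
proof -
  have "lookup (hcomp d p) m = (\<Sum>u\<in>{u\<in>keys p. mdeg u = d}. if u = m then lookup p u else 0)"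
    unfolding hcomp_def lookup_sum lookup_single when_def by (rule sum.cong) auto
  then show ?thesis by (auto simp: in_keys_iff)
qed

lemma hcomp_add: "hcomp d (p + q) = hcomp d p + hcomp d q"
  by (rule poly_mapping_eqI) (simp add: lookup_hcomp lookup_add)

lemma hcomp_zero [simp]: "hcomp d 0 = 0"
  by (simp add: hcomp_def)

lemma hcomp_homogeneous: "homogeneous d p \<Longrightarrow> hcomp d p = p"
  by (rule poly_mapping_eqI) (auto simp: lookup_hcomp homogeneous_iff)

lemma hcomp_single_other_degree: "mdeg m \<noteq> d \<Longrightarrow> hcomp d (single m c) = 0"
  by (rule poly_mapping_eqI) (auto simp: lookup_hcomp lookup_single when_def)

lemma lookup_psmult: "lookup (psmult c p) m = c * lookup p m"
  unfolding psmult_def mult_map_scale_conv_mult[symmetric]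
  by (simp add: map.rep_eq when_def)

lemma homogeneous_psmult: "homogeneous d p \<Longrightarrow> homogeneous d (psmult c p)"
  unfolding homogeneous_iff lookup_psmult by (metis mult_zero_right)

lemma hcomp_psmult: "hcomp d (psmult c p) = psmult c (hcomp d p)"
  by (rule poly_mapping_eqI) (simp add: lookup_hcomp lookup_psmult)

lemma psmult_mult_right: "psmult c (p * q) = p * psmult c q"
  by (simp add: psmult_def mult.left_commute)

lemma ideal_0: "is_ideal I \<Longrightarrow> 0 \<in> I"
  by (simp add: is_ideal_def)

lemma ideal_add: "is_ideal I \<Longrightarrow> p \<in> I \<Longrightarrow> q \<in> I \<Longrightarrow> p + q \<in> I"
  by (simp add: is_ideal_def)

lemma ideal_mult: "is_ideal I \<Longrightarrow> p \<in> I \<Longrightarrow> f * p \<in> I"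
  by (simp add: is_ideal_def)

lemma ideal_psmult: "is_ideal I \<Longrightarrow> p \<in> I \<Longrightarrow> psmult c p \<in> I"
  by (simp add: psmult_def ideal_mult)

lemma is_ideal_ideal_gen: "is_ideal (ideal_gen S)"
  unfolding ideal_gen_def is_ideal_def by auto

lemma ideal_gen_superset: "S \<subseteq> ideal_gen S"
  unfolding ideal_gen_def by auto

lemma ideal_gen_least: "is_ideal K \<Longrightarrow> S \<subseteq> K \<Longrightarrow> ideal_gen S \<subseteq> K"
  unfolding ideal_gen_def by auto

interpretation pv: vector_space "psmult :: 'k::field \<Rightarrow> ('v, 'k) mpoly \<Rightarrow> ('v, 'k) mpoly"
  by unfold_locales
     (simp_all add: psmult_def distrib_left distrib_right single_add mult.assoc[symmetric] mult_single)

interpretation kv: vector_space "(*) :: 'k::field \<Rightarrow> 'k \<Rightarrow> 'k"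
  by unfold_locales (simp_all add: algebra_simps)

interpretation pk: vector_space_pair "psmult :: 'k::field \<Rightarrow> ('v, 'k) mpoly \<Rightarrow> ('v, 'k) mpoly"
  "(*) :: 'k \<Rightarrow> 'k \<Rightarrow> 'k" ..

lemma module_hom_mult_left: "module_hom psmult psmult (\<lambda>x. l * (x :: ('v, 'k::field) mpoly))"
  by (rule module_hom.intro[OF pv.module_axioms pv.module_axioms])
     (unfold_locales, simp_all add: distrib_left psmult_mult_right)

lemma ideal_subspace: "is_ideal I \<Longrightarrow> pv.subspace I"
  by (simp add: pv.subspace_def ideal_0 ideal_add ideal_psmult)

lemma homogeneous_subspace: "pv.subspace {p. homogeneous d p}"
  by (simp add: pv.subspace_def homogeneous_add homogeneous_psmult)

lemma ideal_homogeneous_subspace: "is_ideal I \<Longrightarrow> pv.subspace {p \<in> I. homogeneous d p}"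
  by (simp add: pv.subspace_def homogeneous_add homogeneous_psmult ideal_0 ideal_add ideal_psmult)

lemma homogeneous_finite_dim:
  obtains F where "finite F" "{p :: ('v::finite, 'k::field) mpoly. homogeneous d p} \<subseteq> pv.span F"
proof
  let ?M = "(\<lambda>m. single m 1) ` {m :: 'v \<Rightarrow>\<^sub>0 nat. mdeg m = d}"
  show "finite ?M" by (simp add: finite_monomials_of_degree)
  show "{p :: ('v, 'k) mpoly. homogeneous d p} \<subseteq> pv.span ?M"
  proof
    fix p :: "('v, 'k) mpoly" assume "p \<in> {p. homogeneous d p}"
    then have "single m 1 \<in> ?M" if "m \<in> keys p" for m using that by (simp add: homogeneous_def)
    then have "(\<Sum>m\<in>keys p. psmult (lookup p m) (single m 1)) \<in> pv.span ?M"
      by (intro pv.span_sum pv.span_scale pv.span_base)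
    then show "p \<in> pv.span ?M"
      by (simp add: psmult_def mult_single poly_mapping_sum_single)
  qed
qed


section \<open>Linear functionals on polynomials\<close>

text \<open>A linear functional on polynomials is given by its values c on the monomials.\<close>

definition dual_eval :: "('a \<Rightarrow> 'k) \<Rightarrow> ('a \<Rightarrow>\<^sub>0 'k::comm_ring_1) \<Rightarrow> 'k" where
  "dual_eval c p = (\<Sum>k\<in>keys p. lookup p k * c k)"

lemma dual_eval_superset:
  "finite S \<Longrightarrow> keys p \<subseteq> S \<Longrightarrow> dual_eval c p = (\<Sum>k\<in>S. lookup p k * c k)"
  unfolding dual_eval_def by (rule sum.mono_neutral_left) (auto simp: in_keys_iff)

lemma dual_eval_add: "dual_eval c (p + q) = dual_eval c p + dual_eval c q"
proof -
  let ?S = "keys p \<union> keys q"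
  have "dual_eval c (p + q) = (\<Sum>k\<in>?S. (lookup p k + lookup q k) * c k)"
    using keys_add[of p q] by (subst dual_eval_superset[of ?S]) (auto simp: lookup_add)
  also have "\<dots> = dual_eval c p + dual_eval c q"
    by (simp add: distrib_right sum.distrib dual_eval_superset[of ?S])
  finally show ?thesis .
qed

lemma dual_eval_zero [simp]: "dual_eval c 0 = 0"
  by (simp add: dual_eval_def)

lemma dual_eval_single [simp]: "dual_eval c (single k v) = v * c k"
  by (cases "v = 0") (simp_all add: dual_eval_def)

lemma dual_eval_diff: "dual_eval c (p - q) = dual_eval c p - dual_eval c q"
  using dual_eval_add[of c "p - q" q] by (simp add: algebra_simps)

lemma dual_eval_psmult: "dual_eval c (psmult a p) = a * dual_eval c p"
  by (rule poly_mapping_additive_eqI[where F = "\<lambda>p. dual_eval c (psmult a p)"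
                                       and G = "\<lambda>p. a * dual_eval c p"])
     (simp_all add: psmult_def distrib_left dual_eval_add mult_single mult.assoc)

lemma dual_eval_mult:
  fixes p q :: "('v, 'k::comm_ring_1) mpoly"
  shows "dual_eval c (q * p) = dual_eval (\<lambda>u. dual_eval c (single u 1 * p)) q"
proof (rule poly_mapping_additive_eqI[where F = "\<lambda>q. dual_eval c (q * p)"
                                        and G = "\<lambda>q. dual_eval (\<lambda>u. dual_eval c (single u 1 * p)) q"])
  fix u a
  have "single u a * p = psmult a (single u 1 * p)"
    by (simp add: psmult_def mult_single mult.assoc[symmetric])
  then show "dual_eval c (single u a * p) = dual_eval (\<lambda>u. dual_eval c (single u 1 * p)) (single u a)"
    by (simp add: dual_eval_psmult)
qed (simp_all add: distrib_right dual_eval_add)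

lemma dual_eval_eq_0_if_homogeneous:
  "homogeneous d p \<Longrightarrow> (\<And>m. mdeg m = d \<Longrightarrow> c m = 0) \<Longrightarrow> dual_eval c p = 0"
  unfolding dual_eval_def homogeneous_def by (intro sum.neutral) auto

lemma dual_eval_linear:
  assumes "Vector_Spaces.linear psmult ((*) :: 'k::field \<Rightarrow> 'k \<Rightarrow> 'k) g"
  shows "dual_eval (\<lambda>m. g (single m 1)) (p :: ('v, 'k) mpoly) = g p"
proof -
  have "g p = g (\<Sum>m\<in>keys p. psmult (lookup p m) (single m 1))"
    by (simp add: psmult_def mult_single poly_mapping_sum_single)
  also have "\<dots> = (\<Sum>m\<in>keys p. lookup p m * g (single m 1))"
    by (simp add: pk.linear_sum[OF assms] pk.linear_scale[OF assms])
  finally show ?thesis by (simp add: dual_eval_def)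
qed

lemma separating_dual_exists:
  fixes W :: "('v, 'k::field) mpoly set"
  assumes "pv.subspace W" "a \<notin> W"
  obtains c where "\<forall>p\<in>W. dual_eval c p = 0" "dual_eval c a = 1"
proof -
  obtain B where B: "B \<subseteq> W" "pv.independent B" "W \<subseteq> pv.span B"
    by (rule pv.maximal_independent_subset)
  have "pv.span B \<subseteq> W" using B(1) assms(1) by (rule pv.span_minimal)
  then have "pv.independent (insert a B)"
    using B(2) assms(2) by (intro pv.independent_insertI) auto
  then obtain g where g: "Vector_Spaces.linear psmult ((*) :: 'k \<Rightarrow> 'k \<Rightarrow> 'k) g"
    "\<forall>x\<in>insert a B. g x = (if x = a then 1 else 0)"
    using pk.linear_independent_extend[of _ "\<lambda>x. if x = a then 1 else 0"] by blast
  have "g y = 0" if "y \<in> B" for y using g(2) B(1) assms(2) that by auto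
  then have "g x = 0" if "x \<in> W" for x
    using pk.linear_eq_0_on_span[OF g(1)] B(3) that by blast
  then show ?thesis
    using that[of "\<lambda>m. g (single m 1)"] g by (simp add: dual_eval_linear)
qed

definition annihilator :: "(('v \<Rightarrow>\<^sub>0 nat) \<Rightarrow> 'k) \<Rightarrow> ('v, 'k::comm_ring_1) mpoly set" where
  "annihilator c = {p. \<forall>q. dual_eval c (q * p) = 0}"

lemma is_ideal_annihilator: "is_ideal (annihilator c)"
  unfolding is_ideal_def annihilator_def
  by (auto simp: distrib_left dual_eval_add) (metis mult.assoc)

lemma dual_eval_annihilator:
  assumes "p \<in> annihilator c"
  shows "dual_eval c p = 0"
proof -
  have "dual_eval c (1 * p) = 0" using assms unfolding annihilator_def by blast
  then show ?thesis by simp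
qed

lemma annihilatorI:
  assumes "\<And>u. dual_eval c (single u 1 * p) = 0"
  shows "p \<in> annihilator c"
proof -
  have "dual_eval c (q * p) = 0" for q
  proof -
    have "dual_eval c (q * p) = dual_eval (\<lambda>u. dual_eval c (single u 1 * p)) q"
      by (rule dual_eval_mult)
    also have "\<dots> = dual_eval (\<lambda>u. 0) q" by (simp only: assms)
    also have "\<dots> = 0" by (simp add: dual_eval_def)
    finally show ?thesis .
  qed
  then show ?thesis by (simp add: annihilator_def)
qed


section \<open>Tensor products\<close>

definition xpart :: "('a + 'b \<Rightarrow>\<^sub>0 nat) \<Rightarrow> 'a \<Rightarrow>\<^sub>0 nat" where
  "xpart m = Poly_Mapping.map_key Inl m"

definition ypart :: "('a + 'b \<Rightarrow>\<^sub>0 nat) \<Rightarrow> 'b \<Rightarrow>\<^sub>0 nat" where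
  "ypart m = Poly_Mapping.map_key Inr m"

lemma lookup_xpart [simp]: "lookup (xpart m) a = lookup m (Inl a)"
  unfolding xpart_def by (simp add: map_key.rep_eq)

lemma lookup_ypart [simp]: "lookup (ypart m) b = lookup m (Inr b)"
  unfolding ypart_def by (simp add: map_key.rep_eq)

lemma mon_l_eq_push_key: "mon_l = (push_key Inl :: ('a \<Rightarrow>\<^sub>0 nat) \<Rightarrow> 'a + 'b \<Rightarrow>\<^sub>0 nat)"
  by (simp add: fun_eq_iff mon_l_def push_key_def)

lemma mon_r_eq_push_key: "mon_r = (push_key Inr :: ('b \<Rightarrow>\<^sub>0 nat) \<Rightarrow> 'a + 'b \<Rightarrow>\<^sub>0 nat)"
  by (simp add: fun_eq_iff mon_r_def push_key_def)

lemma emb_l_eq_push_key: "emb_l = (push_key mon_l :: ('a, 'k::comm_monoid_add) mpoly \<Rightarrow> ('a + 'b, 'k) mpoly)"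
  by (simp add: fun_eq_iff emb_l_def push_key_def)

lemma emb_r_eq_push_key: "emb_r = (push_key mon_r :: ('b, 'k::comm_monoid_add) mpoly \<Rightarrow> ('a + 'b, 'k) mpoly)"
  by (simp add: fun_eq_iff emb_r_def push_key_def)

lemma lookup_mon_l [simp]:
  "lookup (mon_l u :: 'a + 'b \<Rightarrow>\<^sub>0 nat) (Inl a) = lookup u a"
  "lookup (mon_l u :: 'a + 'b \<Rightarrow>\<^sub>0 nat) (Inr b) = 0"
  by (simp_all add: mon_l_eq_push_key lookup_push_key_image lookup_push_key_outside image_iff)

lemma lookup_mon_r [simp]:
  "lookup (mon_r v :: 'a + 'b \<Rightarrow>\<^sub>0 nat) (Inr b) = lookup v b"
  "lookup (mon_r v :: 'a + 'b \<Rightarrow>\<^sub>0 nat) (Inl a) = 0"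
  by (simp_all add: mon_r_eq_push_key lookup_push_key_image lookup_push_key_outside image_iff)

lemma mon_zero [simp]: "mon_l 0 = 0" "mon_r 0 = 0"
  by (simp_all add: mon_l_def mon_r_def)

lemma xpart_ypart_mon [simp]:
  "xpart (mon_l u) = u" "ypart (mon_l u) = 0" "xpart (mon_r v) = 0" "ypart (mon_r v) = v"
  by (simp_all add: poly_mapping_eqI)

lemma xpart_ypart_add [simp]:
  "xpart (m + n) = xpart m + xpart n" "ypart (m + n) = ypart m + ypart n"
  by (simp_all add: poly_mapping_eqI lookup_add)

lemma mon_l_add_mon_r_split: "mon_l (xpart m) + mon_r (ypart m) = m"
proof (rule poly_mapping_eqI)
  fix k show "lookup (mon_l (xpart m) + mon_r (ypart m)) k = lookup m k"
    by (cases k) (simp_all add: lookup_add)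
qed

lemma inj_mon_l: "inj mon_l"
  by (metis injI xpart_ypart_mon(1))

lemma inj_mon_r: "inj mon_r"
  by (metis injI xpart_ypart_mon(4))

lemma mdeg_mon [simp]: "mdeg (mon_l u) = mdeg u" "mdeg (mon_r v) = mdeg v"
  by (simp_all add: mon_l_eq_push_key mon_r_eq_push_key mdeg_push_key)

lemma mdeg_split: "mdeg m = mdeg (xpart m) + mdeg (ypart m)"
  by (metis mdeg_add mdeg_mon mon_l_add_mon_r_split)

lemma mon_add: "mon_l (u + v) = mon_l u + mon_l v" "mon_r (u + v) = mon_r u + mon_r v"
  by (simp_all add: mon_l_eq_push_key mon_r_eq_push_key push_key_add)

lemma emb_add: "emb_l (p + q) = emb_l p + emb_l q" "emb_r (p + q) = emb_r p + emb_r q"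
  by (simp_all add: emb_l_eq_push_key emb_r_eq_push_key push_key_add)

lemma emb_single:
  "emb_l (single u a) = single (mon_l u) a" "emb_r (single v a) = single (mon_r v) a"
  by (simp_all add: emb_l_eq_push_key emb_r_eq_push_key)

lemma emb_mult:
  fixes p q :: "('a, 'k::comm_semiring_1) mpoly" and p' q' :: "('b, 'k) mpoly"
  shows "emb_l (p * q) = emb_l p * emb_l q" "emb_r (p' * q') = emb_r p' * emb_r q'"
  by (simp_all add: emb_l_eq_push_key emb_r_eq_push_key push_key_mult mon_add)

lemma homogeneous_emb:
  "homogeneous d p \<Longrightarrow> homogeneous d (emb_l p)" "homogeneous d q \<Longrightarrow> homogeneous d (emb_r q)"
  by (simp_all add: emb_l_eq_push_key emb_r_eq_push_key homogeneous_push_key inj_mon_l inj_mon_r)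

lemma lookup_emb_l: "lookup (emb_l p) m = (if ypart m = 0 then lookup p (xpart m) else 0)"
proof (cases "ypart m = 0")
  case True
  then have "m = mon_l (xpart m)" using mon_l_add_mon_r_split[of m] by simp
  then show ?thesis using True by (metis emb_l_eq_push_key inj_mon_l lookup_push_key_image)
next
  case False
  then have "m \<notin> range mon_l" by auto
  then show ?thesis using False by (simp add: emb_l_eq_push_key lookup_push_key_outside)
qed

lemma lookup_emb_r: "lookup (emb_r p) m = (if xpart m = 0 then lookup p (ypart m) else 0)"
proof (cases "xpart m = 0")
  case True
  then have "m = mon_r (ypart m)" using mon_l_add_mon_r_split[of m] by simp
  then show ?thesis using True by (metis emb_r_eq_push_key inj_mon_r lookup_push_key_image)
next
  case False
  then have "m \<notin> range mon_r" by auto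
  then show ?thesis using False by (simp add: emb_r_eq_push_key lookup_push_key_outside)
qed

lemma single_eq_emb_mult: "single m (c :: 'k::semiring_1) = emb_l (single (xpart m) c) * emb_r (single (ypart m) 1)"
  by (simp add: emb_single mult_single mon_l_add_mon_r_split)

lemma linear_form_tensor_split:
  assumes "homogeneous 1 (l :: ('a + 'b, 'k::comm_monoid_add) mpoly)"
  obtains l1 l2 where "homogeneous 1 l1" "homogeneous 1 l2" "l = emb_l l1 + emb_r l2"
proof
  let ?l1 = "Poly_Mapping.map_key mon_l l" and ?l2 = "Poly_Mapping.map_key mon_r l"
  have lookup_l12: "lookup ?l1 u = lookup l (mon_l u)" "lookup ?l2 v = lookup l (mon_r v)" for u v
    by (simp_all add: map_key.rep_eq inj_mon_l inj_mon_r)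
  show "homogeneous 1 ?l1" "homogeneous 1 ?l2"
    using assms by (auto simp: homogeneous_iff lookup_l12)
  show "l = emb_l ?l1 + emb_r ?l2"
  proof (rule poly_mapping_eqI)
    fix m :: "'a + 'b \<Rightarrow>\<^sub>0 nat"
    have l_0: "lookup l 0 = 0"
    proof (rule ccontr)
      assume "lookup l 0 \<noteq> 0"
      then have "mdeg (0 :: 'a + 'b \<Rightarrow>\<^sub>0 nat) = 1"
        using assms unfolding homogeneous_iff by blast
      then show False by simp
    qed
    have "mdeg m \<noteq> 1" if "xpart m \<noteq> 0" "ypart m \<noteq> 0"
      using that mdeg_eq_0_iff[of "xpart m"] mdeg_eq_0_iff[of "ypart m"] by (simp add: mdeg_split)
    then have l_mixed: "lookup l m = 0" if "xpart m \<noteq> 0" "ypart m \<noteq> 0"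
      using assms that by (auto simp: homogeneous_iff)
    show "lookup l m = lookup (emb_l ?l1 + emb_r ?l2) m"
      using mon_l_add_mon_r_split[of m] l_0 l_mixed
      by (cases "xpart m = 0"; cases "ypart m = 0")
         (auto simp: lookup_add lookup_emb_l lookup_emb_r lookup_l12)
  qed
qed

lemma emb_mem_tensor_ideal:
  "p \<in> I \<Longrightarrow> emb_l p \<in> tensor_ideal I J" "q \<in> J \<Longrightarrow> emb_r q \<in> tensor_ideal I J"
  unfolding tensor_ideal_def by (simp_all add: subsetD[OF ideal_gen_superset])

lemma is_ideal_tensor_ideal: "is_ideal (tensor_ideal I J)"
  unfolding tensor_ideal_def by (rule is_ideal_ideal_gen)

definition tensor_dual ::
    "(('a \<Rightarrow>\<^sub>0 nat) \<Rightarrow> 'k) \<Rightarrow> (('b \<Rightarrow>\<^sub>0 nat) \<Rightarrow> 'k) \<Rightarrow> ('a + 'b \<Rightarrow>\<^sub>0 nat) \<Rightarrow> 'k::times" where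
  "tensor_dual c1 c2 m = c1 (xpart m) * c2 (ypart m)"

lemma dual_eval_tensor_dual:
  "dual_eval (tensor_dual c1 c2) (emb_l p * emb_r q) = dual_eval c1 p * dual_eval c2 q"
proof (rule poly_mapping_additive_eqI[where
      F = "\<lambda>p. dual_eval (tensor_dual c1 c2) (emb_l p * emb_r q)"
      and G = "\<lambda>p. dual_eval c1 p * dual_eval c2 q"])
  fix u a
  show "dual_eval (tensor_dual c1 c2) (emb_l (single u a) * emb_r q)
      = dual_eval c1 (single u a) * dual_eval c2 q"
    by (rule poly_mapping_additive_eqI[where
          F = "\<lambda>q. dual_eval (tensor_dual c1 c2) (emb_l (single u a) * emb_r q)"
          and G = "\<lambda>q. dual_eval c1 (single u a) * dual_eval c2 q"])
       (simp_all add: emb_add emb_single distrib_left dual_eval_add mult_single tensor_dual_def)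
qed (simp_all add: emb_add distrib_right dual_eval_add)

lemma tensor_dual_vanishes_on_tensor_ideal:
  fixes I :: "('a, 'k::comm_ring_1) mpoly set" and J :: "('b, 'k) mpoly set"
  assumes "is_ideal I" "is_ideal J" "\<forall>p\<in>I. dual_eval c1 p = 0" "\<forall>q\<in>J. dual_eval c2 q = 0"
    and "f \<in> tensor_ideal I J"
  shows "dual_eval (tensor_dual c1 c2) f = 0"
proof -
  let ?c = "tensor_dual c1 c2"
  have "emb_l p \<in> annihilator ?c" if "p \<in> I" for p
  proof (rule annihilatorI)
    fix u :: "'a + 'b \<Rightarrow>\<^sub>0 nat"
    have "single u 1 * emb_l p = emb_l (single (xpart u) 1 * p) * emb_r (single (ypart u) 1)"
      by (subst single_eq_emb_mult) (simp add: emb_mult mult_ac)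
    then have "dual_eval ?c (single u 1 * emb_l p)
        = dual_eval c1 (single (xpart u) 1 * p) * dual_eval c2 (single (ypart u) 1)"
      by (simp only: dual_eval_tensor_dual)
    also have "\<dots> = 0" using assms(3) ideal_mult[OF assms(1) that] by simp
    finally show "dual_eval ?c (single u 1 * emb_l p) = 0" .
  qed
  moreover have "emb_r q \<in> annihilator ?c" if "q \<in> J" for q
  proof (rule annihilatorI)
    fix u :: "'a + 'b \<Rightarrow>\<^sub>0 nat"
    have "single u 1 * emb_r q = emb_l (single (xpart u) 1) * emb_r (single (ypart u) 1 * q)"
      by (subst single_eq_emb_mult) (simp add: emb_mult mult_ac)
    then have "dual_eval ?c (single u 1 * emb_r q)
        = dual_eval c1 (single (xpart u) 1) * dual_eval c2 (single (ypart u) 1 * q)"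
      by (simp only: dual_eval_tensor_dual)
    also have "\<dots> = 0" using assms(4) ideal_mult[OF assms(2) that] by simp
    finally show "dual_eval ?c (single u 1 * emb_r q) = 0" .
  qed
  ultimately have "tensor_ideal I J \<subseteq> annihilator ?c"
    unfolding tensor_ideal_def by (intro ideal_gen_least is_ideal_annihilator) blast
  then show ?thesis using assms(5) dual_eval_annihilator by blast
qed


definition mult_injective :: "('v, 'k::field) mpoly set \<Rightarrow> ('v, 'k) mpoly \<Rightarrow> nat \<Rightarrow> bool" where
  "mult_injective I l d \<longleftrightarrow> (\<forall>f. homogeneous d f \<and> l * f \<in> I \<longrightarrow> f \<in> I)"

definition mult_surjective :: "('v, 'k::field) mpoly set \<Rightarrow> ('v, 'k) mpoly \<Rightarrow> nat \<Rightarrow> bool" where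
  "mult_surjective I l d \<longleftrightarrow>
     (\<forall>g. homogeneous (d + 1) g \<longrightarrow> (\<exists>f. homogeneous d f \<and> g - l * f \<in> I))"

lemma max_rank_iff: "max_rank I l d \<longleftrightarrow> mult_injective I l d \<or> mult_surjective I l d"
  by (simp add: max_rank_def mult_injective_def mult_surjective_def)

lemma not_mult_injective_if_hf_decreasing:
  fixes J :: "('v::finite, 'k::field) mpoly set"
  assumes "is_ideal J" "homogeneous 1 l" "hf J (d + 1) < hf J d"
  shows "\<not> mult_injective J l d"
proof
  assume inj: "mult_injective J l d"
  obtain F1 F2 where F: "finite F1" "{p :: ('v, 'k) mpoly. homogeneous d p} \<subseteq> pv.span F1"
    "finite F2" "{p :: ('v, 'k) mpoly. homogeneous (d + 1) p} \<subseteq> pv.span F2"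
    by (metis homogeneous_finite_dim)
  have "hf J d \<le> hf J (d + 1)"
    unfolding hf_def
  proof (rule pv.quotient_dim_le_if_injective[OF F(2,1,4,3) _ _ _ _ module_hom_mult_left])
    show "(\<lambda>x. l * x) ` {p. homogeneous d p} \<subseteq> {p. homogeneous (d + 1) p}"
      using homogeneous_mult[OF assms(2)] by (auto simp: add.commute)
    show "x \<in> {p \<in> J. homogeneous d p}"
      if "x \<in> {p. homogeneous d p}" "l * x \<in> {p \<in> J. homogeneous (d + 1) p}" for x
      using inj that by (simp add: mult_injective_def)
  qed (auto simp: homogeneous_subspace ideal_homogeneous_subspace assms(1))
  with assms(3) show False by simp
qed

lemma not_mult_surjective_if_hf_increasing:
  fixes J :: "('v::finite, 'k::field) mpoly set"
  assumes "is_ideal J" "homogeneous 1 l" "hf J d < hf J (d + 1)"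
  shows "\<not> mult_surjective J l d"
proof
  assume surj: "mult_surjective J l d"
  obtain F1 F2 where F: "finite F1" "{p :: ('v, 'k) mpoly. homogeneous d p} \<subseteq> pv.span F1"
    "finite F2" "{p :: ('v, 'k) mpoly. homogeneous (d + 1) p} \<subseteq> pv.span F2"
    by (metis homogeneous_finite_dim)
  have "hf J (d + 1) \<le> hf J d"
    unfolding hf_def
  proof (rule pv.quotient_dim_le_if_surjective[OF F(2,1,4,3) _ _ _ _ module_hom_mult_left])
    show "(\<lambda>x. l * x) ` {p \<in> J. homogeneous d p} \<subseteq> {p \<in> J. homogeneous (d + 1) p}"
      using homogeneous_mult[OF assms(2)] ideal_mult[OF assms(1)] by (auto simp: add.commute)
    show "\<exists>x\<in>{p. homogeneous d p}. y - l * x \<in> {p \<in> J. homogeneous (d + 1) p}"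
      if "y \<in> {p. homogeneous (d + 1) p}" for y
      using surj that homogeneous_diff homogeneous_mult[OF assms(2)]
      by (fastforce simp: mult_surjective_def add.commute)
  qed (auto simp: ideal_homogeneous_subspace assms(1))
  with assms(3) show False by simp
qed

lemma not_mult_injective_dual_witness:
  assumes "is_ideal I" "\<not> mult_injective I l d"
  obtains a c where "homogeneous d a" "l * a \<in> I" "\<forall>p\<in>I. dual_eval c p = 0" "dual_eval c a = 1"
proof -
  obtain a where a: "homogeneous d a" "l * a \<in> I" "a \<notin> I"
    using assms(2) by (auto simp: mult_injective_def)
  obtain c where "\<forall>p\<in>I. dual_eval c p = 0" "dual_eval c a = 1"
    by (rule separating_dual_exists[OF ideal_subspace[OF assms(1)] a(3)])
  then show ?thesis by (rule that[OF a(1,2)])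
qed

text \<open>A subspace since hcomp e is linear. It contains l times every form of degree d, every
  polynomial without a component of degree e and, for homogeneous I, the ideal I itself.\<close>
lemma subspace_hcomp_mod_multiples:
  assumes "is_ideal I"
  shows "pv.subspace {p. \<exists>h. homogeneous d h \<and> hcomp e p - l * h \<in> I}"
proof (rule pv.subspaceI)
  show "0 \<in> {p. \<exists>h. homogeneous d h \<and> hcomp e p - l * h \<in> I}"
    using ideal_0[OF assms] by (auto intro!: exI[of _ 0])
next
  fix x y assume "x \<in> {p. \<exists>h. homogeneous d h \<and> hcomp e p - l * h \<in> I}"
    "y \<in> {p. \<exists>h. homogeneous d h \<and> hcomp e p - l * h \<in> I}"
  then obtain hx hy where "homogeneous d hx" "hcomp e x - l * hx \<in> I"
    "homogeneous d hy" "hcomp e y - l * hy \<in> I" by blast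
  moreover have "hcomp e (x + y) - l * (hx + hy) = (hcomp e x - l * hx) + (hcomp e y - l * hy)"
    by (simp add: hcomp_add algebra_simps)
  ultimately show "x + y \<in> {p. \<exists>h. homogeneous d h \<and> hcomp e p - l * h \<in> I}"
    using ideal_add[OF assms] homogeneous_add by (metis (mono_tags, lifting) mem_Collect_eq)
next
  fix c x assume "x \<in> {p. \<exists>h. homogeneous d h \<and> hcomp e p - l * h \<in> I}"
  then obtain h where "homogeneous d h" "hcomp e x - l * h \<in> I" by blast
  moreover have "hcomp e (psmult c x) - l * psmult c h = psmult c (hcomp e x - l * h)"
    by (simp only: hcomp_psmult) (simp add: psmult_def algebra_simps)
  ultimately show "psmult c x \<in> {p. \<exists>h. homogeneous d h \<and> hcomp e p - l * h \<in> I}"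
    using ideal_psmult[OF assms] homogeneous_psmult by (metis (mono_tags, lifting) mem_Collect_eq)
qed

lemma not_mult_surjective_dual_witness:
  assumes "homog_ideal I" "homogeneous 1 l" "\<not> mult_surjective I l d"
  obtains g c where "homogeneous (d + 1) g" "dual_eval c g = 1" "\<forall>p\<in>I. dual_eval c p = 0"
    "\<forall>h. homogeneous d h \<longrightarrow> dual_eval c (l * h) = 0" "\<forall>m. mdeg m \<noteq> d + 1 \<longrightarrow> c m = 0"
proof -
  have I: "is_ideal I" "\<And>p e. p \<in> I \<Longrightarrow> hcomp e p \<in> I"
    using assms(1) by (simp_all add: homog_ideal_def)
  obtain g where g: "homogeneous (d + 1) g" "\<And>f. homogeneous d f \<Longrightarrow> g - l * f \<notin> I"
    using assms(3) by (auto simp: mult_surjective_def)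
  define W where "W = {p. \<exists>h. homogeneous d h \<and> hcomp (d + 1) p - l * h \<in> I}"
  have "pv.subspace W" unfolding W_def by (rule subspace_hcomp_mod_multiples[OF I(1)])
  moreover have "g \<notin> W" using g by (simp add: W_def hcomp_homogeneous)
  ultimately obtain c where c: "\<forall>p\<in>W. dual_eval c p = 0" "dual_eval c g = 1"
    by (rule separating_dual_exists)
  have "p \<in> W" if "p \<in> I" for p
    using I that by (auto simp: W_def intro!: exI[of _ 0])
  moreover have "l * h \<in> W" if "homogeneous d h" for h
    using that homogeneous_mult[OF assms(2) that] ideal_0[OF I(1)]
    by (auto simp: W_def hcomp_homogeneous intro!: exI[of _ h])
  moreover have "c m = 0" if "mdeg m \<noteq> d + 1" for m
  proof -
    have "single m 1 \<in> W"
      using that ideal_0[OF I(1)] by (auto simp: W_def hcomp_single_other_degree intro!: exI[of _ 0])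
    then have "dual_eval c (single m 1) = 0" using c(1) by blast
    then show ?thesis by simp
  qed
  ultimately show ?thesis using that[OF g(1) c(2)] c(1) by blast
qed


section \<open>Failure of maximal rank on the tensor product\<close>

lemma tensor_not_mult_injective:
  fixes I :: "('a, 'k::field) mpoly set" and J :: "('b, 'k) mpoly set"
  assumes "is_ideal I" "is_ideal J" "\<not> mult_injective I l1 i" "\<not> mult_injective J l2 j"
  shows "\<not> mult_injective (tensor_ideal I J) (emb_l l1 + emb_r l2) (i + j)"
proof
  let ?T = "tensor_ideal I J" and ?l = "emb_l l1 + emb_r l2"
  assume inj: "mult_injective ?T ?l (i + j)"
  obtain a c1 where a: "homogeneous i a" "l1 * a \<in> I" "\<forall>p\<in>I. dual_eval c1 p = 0" "dual_eval c1 a = 1"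
    using not_mult_injective_dual_witness[OF assms(1,3)] .
  obtain b c2 where b: "homogeneous j b" "l2 * b \<in> J" "\<forall>q\<in>J. dual_eval c2 q = 0" "dual_eval c2 b = 1"
    using not_mult_injective_dual_witness[OF assms(2,4)] .
  let ?f = "emb_l a * emb_r b"
  have "?l * ?f = emb_r b * emb_l (l1 * a) + emb_l a * emb_r (l2 * b)"
    by (simp add: emb_mult algebra_simps)
  also have "\<dots> \<in> ?T"
    using emb_mem_tensor_ideal(1)[OF a(2)] emb_mem_tensor_ideal(2)[OF b(2)]
    by (intro ideal_add ideal_mult is_ideal_tensor_ideal)
  finally have "?f \<in> ?T"
    using inj homogeneous_mult[OF homogeneous_emb(1)[OF a(1)] homogeneous_emb(2)[OF b(1)]]
    by (simp add: mult_injective_def)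
  then have "dual_eval (tensor_dual c1 c2) ?f = 0"
    by (rule tensor_dual_vanishes_on_tensor_ideal[OF assms(1,2) a(3) b(3)])
  moreover have "dual_eval (tensor_dual c1 c2) ?f = 1"
    using a(4) b(4) by (simp add: dual_eval_tensor_dual)
  ultimately show False by simp
qed

text \<open>On a monomial x^u y^v of degree i + j + 1 the product with l is evaluated as
  c1 (x^u l1) c2 (y^v) + c1 (x^u) c2 (y^v l2). Both terms vanish for degree reasons, since c1
  lives in degree i + 1 and kills l1 times the forms of degree i, and likewise for c2.\<close>
lemma tensor_dual_vanishes_on_multiples:
  assumes "\<forall>h. homogeneous i h \<longrightarrow> dual_eval c1 (l1 * h) = 0" "\<forall>m. mdeg m \<noteq> i + 1 \<longrightarrow> c1 m = 0"
    and "\<forall>h. homogeneous j h \<longrightarrow> dual_eval c2 (l2 * h) = 0" "\<forall>m. mdeg m \<noteq> j + 1 \<longrightarrow> c2 m = 0"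
    and "homogeneous (i + j + 1) f"
  shows "dual_eval (tensor_dual c1 c2) ((emb_l l1 + emb_r l2) * f) = 0"
proof -
  let ?c = "tensor_dual c1 c2"
  have "dual_eval ?c (single u 1 * (emb_l l1 + emb_r l2)) = 0" if "mdeg u = i + j + 1" for u
  proof -
    let ?x = "single (xpart u) 1" and ?y = "single (ypart u) 1"
    have "single u 1 * (emb_l l1 + emb_r l2) = emb_l (?x * l1) * emb_r ?y + emb_l ?x * emb_r (?y * l2)"
      by (subst single_eq_emb_mult) (simp add: emb_mult algebra_simps)
    then have "dual_eval ?c (single u 1 * (emb_l l1 + emb_r l2))
        = dual_eval c1 (?x * l1) * c2 (ypart u) + c1 (xpart u) * dual_eval c2 (?y * l2)"
      by (simp add: dual_eval_add dual_eval_tensor_dual)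
    moreover have "dual_eval c1 (?x * l1) * c2 (ypart u) = 0"
      using assms(1,4) that homogeneous_single[of "xpart u" 1]
      by (cases "mdeg (ypart u) = j + 1") (auto simp: mdeg_split[of u] mult.commute)
    moreover have "c1 (xpart u) * dual_eval c2 (?y * l2) = 0"
      using assms(2,3) that homogeneous_single[of "ypart u" 1]
      by (cases "mdeg (xpart u) = i + 1") (auto simp: mdeg_split[of u] mult.commute)
    ultimately show ?thesis by simp
  qed
  then have "dual_eval ?c (f * (emb_l l1 + emb_r l2)) = 0"
    using assms(5) by (subst dual_eval_mult) (rule dual_eval_eq_0_if_homogeneous)
  then show ?thesis by (simp add: mult.commute)
qed

lemma tensor_not_mult_surjective:
  fixes I :: "('a, 'k::field) mpoly set" and J :: "('b, 'k) mpoly set"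
  assumes "homog_ideal I" "homog_ideal J" "homogeneous 1 l1" "homogeneous 1 l2"
    and "\<not> mult_surjective I l1 i" "\<not> mult_surjective J l2 j"
  shows "\<not> mult_surjective (tensor_ideal I J) (emb_l l1 + emb_r l2) (i + j + 1)"
proof
  let ?T = "tensor_ideal I J" and ?l = "emb_l l1 + emb_r l2"
  assume surj: "mult_surjective ?T ?l (i + j + 1)"
  obtain g1 c1 where c1: "homogeneous (i + 1) g1" "dual_eval c1 g1 = 1" "\<forall>p\<in>I. dual_eval c1 p = 0"
      "\<forall>h. homogeneous i h \<longrightarrow> dual_eval c1 (l1 * h) = 0" "\<forall>m. mdeg m \<noteq> i + 1 \<longrightarrow> c1 m = 0"
    using not_mult_surjective_dual_witness[OF assms(1,3,5)] .
  obtain g2 c2 where c2: "homogeneous (j + 1) g2" "dual_eval c2 g2 = 1" "\<forall>q\<in>J. dual_eval c2 q = 0"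
      "\<forall>h. homogeneous j h \<longrightarrow> dual_eval c2 (l2 * h) = 0" "\<forall>m. mdeg m \<noteq> j + 1 \<longrightarrow> c2 m = 0"
    using not_mult_surjective_dual_witness[OF assms(2,4,6)] .
  let ?g = "emb_l g1 * emb_r g2" and ?c = "tensor_dual c1 c2"
  have "homogeneous (i + 1 + (j + 1)) ?g"
    by (intro homogeneous_mult homogeneous_emb c1(1) c2(1))
  then obtain f where f: "homogeneous (i + j + 1) f" "?g - ?l * f \<in> ?T"
    using surj by (auto simp: mult_surjective_def add_ac)
  have ideals: "is_ideal I" "is_ideal J" using assms(1,2) by (simp_all add: homog_ideal_def)
  have "dual_eval ?c (?g - ?l * f) = 0"
    by (rule tensor_dual_vanishes_on_tensor_ideal[OF ideals c1(3) c2(3) f(2)])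
  moreover have "dual_eval ?c ?g = 1" using c1(2) c2(2) by (simp add: dual_eval_tensor_dual)
  moreover have "dual_eval ?c (?l * f) = 0"
    by (rule tensor_dual_vanishes_on_multiples[OF c1(4,5) c2(4,5) f(1)])
  ultimately show False by (simp add: dual_eval_diff)
qed

lemma not_max_rank_at_isolated_peak:
  fixes J :: "('v::finite, 'k::field) mpoly set"
  assumes "is_ideal J" "isolated_peak J (d + 1)" "homogeneous 1 l"
  shows "\<not> mult_injective J l (d + 1) \<and> \<not> mult_surjective J l d"
  using assms not_mult_injective_if_hf_decreasing[of J l "d + 1"]
    not_mult_surjective_if_hf_increasing[of J l d]
  by (simp add: isolated_peak_def)

lemma tensor_fails_WLP_in:
  fixes I :: "('a, 'k::field) mpoly set" and J :: "('b, 'k) mpoly set"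
  assumes "homog_ideal I" "homog_ideal J" "fails_WLP_in I i"
    and J_fails: "\<And>l. homogeneous 1 l \<Longrightarrow> \<not> mult_injective J l (d + 1) \<and> \<not> mult_surjective J l d"
  shows "fails_WLP_in (tensor_ideal I J) (i + d + 1)"
  unfolding fails_WLP_in_def max_rank_iff
proof (intro allI impI)
  fix l :: "('a + 'b, 'k) mpoly" assume "homogeneous 1 l"
  then obtain l1 l2 where l: "homogeneous 1 l1" "homogeneous 1 l2" "l = emb_l l1 + emb_r l2"
    by (rule linear_form_tensor_split)
  have "is_ideal I" "is_ideal J" using assms(1,2) by (simp_all add: homog_ideal_def)
  moreover have "\<not> mult_injective I l1 i" "\<not> mult_surjective I l1 i"
    using assms(3) l(1) by (simp_all add: fails_WLP_in_def max_rank_iff)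
  ultimately show "\<not> (mult_injective (tensor_ideal I J) l (i + d + 1) \<or>
      mult_surjective (tensor_ideal I J) l (i + d + 1))"
    using tensor_not_mult_injective tensor_not_mult_surjective[OF assms(1,2) l(1,2)]
      J_fails[OF l(2)] l(3) by (metis add.assoc)
qed

theorem theorem3p2:
  fixes I :: "('a::finite, 'k::field) mpoly set"
    and J :: "('b::finite, 'k) mpoly set"
    and i j :: nat
  assumes "std_graded_artinian I"
    and "std_graded_artinian J"
    and "fails_WLP_in I i"
    and "isolated_peak J j"
  shows "\<not> has_WLP (tensor_ideal I J) \<and> fails_WLP_in (tensor_ideal I J) (i + j)"
proof -
  have J: "homog_ideal J" "is_ideal J"
    using assms(2) by (simp_all add: std_graded_artinian_def homog_ideal_def)
  obtain d where j: "j = d + 1"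
    using assms(4) by (metis isolated_peak_def le_add_diff_inverse2)
  have "fails_WLP_in (tensor_ideal I J) (i + d + 1)"
  proof (rule tensor_fails_WLP_in[OF _ J(1) assms(3)])
    show "homog_ideal I" using assms(1) by (simp add: std_graded_artinian_def)
    show "\<not> mult_injective J l (d + 1) \<and> \<not> mult_surjective J l d" if "homogeneous 1 l" for l
      using not_max_rank_at_isolated_peak[OF J(2) _ that] assms(4) j by simp
  qed
  then show ?thesis using j by (auto simp: has_WLP_def fails_WLP_in_def)
qed

end
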